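(* Let $\mathcal{M}\in\mathbb{R}^{m\times m}$ be a skew-symmetric matrix ($\mathcal{M}^\top=-\mathcal{M}$), viewed as the payoff matrix (for player 1) of a finite two-player zero-sum symmetric game in which each player has the pure strategy set $S_g=\{1,\dots,m\}$. Let $C=\{C_1,\dots,C_{|C|}\}$ be the Nash Clustering of this game, and for $k\in[|C|]$ let $\mathbf{p_k}=\mathrm{Nash}\big(\mathcal{M}\,\big|\,\bigcup_{r=k}^{|C|}C_r\big)$. Define $\mathrm{NPP}(C_i,C_j)=\mathbf{p_i}^\top\mathcal{M}\,\mathbf{p_j}$. Then $\mathrm{NPP}(C_i,C_j)\ge 0$ for all $i\le j$, and $\mathrm{NPP}(C_i,C_j)\le 0$ for all $i>j$.
   Context: For a nonempty subset $X\subseteq S_g$, a symmetric Nash equilibrium of the game restricted to $X$ is a probability vector $\mathbf{p}\in\Delta_m$ with $\mathbf{p}_s=0$ for $s\notin X$ such that $\mathbf{q}^\top\mathcal{M}\mathbf{p}\le \mathbf{p}^\top\mathcal{M}\mathbf{p}\le \mathbf{p}^\top\mathcal{M}\mathbf{q}$ for every probability vector $\mathbf{q}\in\Delta_m$ supported in $X$. $\mathrm{Nash}(\mathcal{M}\mid X)$ denotes the (unique) maximum-entropy such symmetric Nash equilibrium, i.e. the one maximizing $-\sum_j \mathbf{p}_j\log\mathbf{p}_j$, and $\mathrm{supp}(\mathbf{p})=\{s:\mathbf{p}_s>0\}$. Nash Clustering: set $C_0=\emptyset$ and $C_i=\mathrm{supp}\big(\mathrm{Nash}(\mathcal{M}\mid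 S_g\setminus\bigcup_{k=0}^{i-1}C_k)\big)$ for $i\ge1$ (defined while the remaining set is nonempty); the Nash Clustering is the collection $C=\{C_j: j\ge 1,\ C_j\neq\emptyset\}$, indexed in this order. *)

theory Defs
  imports Complex_Main
begin

text \<open>Pure strategies are indexed by 0..m-1 (i.e. S_g = {..<m}); a matrix is a function
  M :: nat \<Rightarrow> nat \<Rightarrow> real, only its entries with indices < m are relevant.\<close>

definition prob_vec :: "nat \<Rightarrow> (nat \<Rightarrow> real) \<Rightarrow> bool" where
  "prob_vec m p \<longleftrightarrow> (\<forall>s<m. 0 \<le> p s) \<and> (\<forall>s. m \<le> s \<longrightarrow> p s = 0) \<and> (\<Sum>s<m. p s) = 1"

definition supported_in :: "(nat \<Rightarrow> real) \<Rightarrow> nat set \<Rightarrow> bool" where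
  "supported_in p X \<longleftrightarrow> (\<forall>s. s \<notin> X \<longrightarrow> p s = 0)"

definition bil :: "(nat \<Rightarrow> nat \<Rightarrow> real) \<Rightarrow> nat \<Rightarrow> (nat \<Rightarrow> real) \<Rightarrow> (nat \<Rightarrow> real) \<Rightarrow> real" where
  "bil M m p q = (\<Sum>i<m. \<Sum>j<m. p i * M i j * q j)"

definition sym_nash :: "(nat \<Rightarrow> nat \<Rightarrow> real) \<Rightarrow> nat \<Rightarrow> nat set \<Rightarrow> (nat \<Rightarrow> real) \<Rightarrow> bool" where
  "sym_nash M m X p \<longleftrightarrow> prob_vec m p \<and> supported_in p X \<and>
     (\<forall>q. prob_vec m q \<and> supported_in q X \<longrightarrow>
        bil M m q p \<le> bil M m p p \<and> bil M m p p \<le> bil M m p q)"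

text \<open>Shannon entropy (note ln 0 = 0 in Isabelle, so 0 * ln 0 = 0).\<close>
definition entropy :: "nat \<Rightarrow> (nat \<Rightarrow> real) \<Rightarrow> real" where
  "entropy m p = - (\<Sum>j<m. p j * ln (p j))"

definition nash_me :: "(nat \<Rightarrow> nat \<Rightarrow> real) \<Rightarrow> nat \<Rightarrow> nat set \<Rightarrow> (nat \<Rightarrow> real)" where
  "nash_me M m X = (THE p. sym_nash M m X p \<and> (\<forall>q. sym_nash M m X q \<longrightarrow> entropy m q \<le> entropy m p))"

definition supp :: "nat \<Rightarrow> (nat \<Rightarrow> real) \<Rightarrow> nat set" where
  "supp m p = {s. s < m \<and> p s > 0}"

text \<open>Remaining set before step i+1 (0-indexed): S_g minus C_1 ... C_i.\<close>
fun nc_rem :: "(nat \<Rightarrow> nat \<Rightarrow> real) \<Rightarrow> nat \<Rightarrow> nat \<Rightarrow> nat set" where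
  "nc_rem M m 0 = {..<m}"
| "nc_rem M m (Suc i) = nc_rem M m i - supp m (nash_me M m (nc_rem M m i))"

text \<open>Cluster number k (0-indexed; corresponds to C_{k+1} in the paper).\<close>
definition nc_cluster :: "(nat \<Rightarrow> nat \<Rightarrow> real) \<Rightarrow> nat \<Rightarrow> nat \<Rightarrow> nat set" where
  "nc_cluster M m k = supp m (nash_me M m (nc_rem M m k))"

definition nc_num :: "(nat \<Rightarrow> nat \<Rightarrow> real) \<Rightarrow> nat \<Rightarrow> nat" where
  "nc_num M m = (LEAST i. nc_rem M m i = {})"

definition nc_p :: "(nat \<Rightarrow> nat \<Rightarrow> real) \<Rightarrow> nat \<Rightarrow> nat \<Rightarrow> (nat \<Rightarrow> real)" where
  "nc_p M m k = nash_me M m (\<Union>r\<in>{k..<nc_num M m}. nc_cluster M m r)"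

definition NPP :: "(nat \<Rightarrow> nat \<Rightarrow> real) \<Rightarrow> nat \<Rightarrow> nat \<Rightarrow> nat \<Rightarrow> real" where
  "NPP M m i j = bil M m (nc_p M m i) (nc_p M m j)"

end

theory Submission
  imports Defs "HOL-Analysis.Analysis" "HOL-Real_Asymp.Real_Asymp"
begin

text \<open>For a skew-symmetric payoff matrix the payoff \<open>p\<^sup>T M p\<close> vanishes, so \<open>p\<close> is a symmetric
  equilibrium of the game restricted to \<open>X\<close> iff no pure strategy of \<open>X\<close> earns a positive payoff
  against \<open>p\<close>. The equilibria on \<open>X\<close> therefore form a nonempty compact convex set, on which the
  strictly concave entropy has a unique maximiser; its support is the next Nash cluster, so the
  remaining sets strictly shrink and \<open>p\<^sub>k\<close> is the equilibrium on the set remaining before step \<open>k\<close>.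
  For \<open>i \<le> j\<close> the vector \<open>p\<^sub>j\<close> is supported in the set on which \<open>p\<^sub>i\<close> is an equilibrium, whence
  \<open>p\<^sub>i\<^sup>T M p\<^sub>j \<ge> p\<^sub>i\<^sup>T M p\<^sub>i = 0\<close>; the case \<open>i > j\<close> follows by skew symmetry.\<close>

definition skew_symmetric :: "(nat \<Rightarrow> nat \<Rightarrow> real) \<Rightarrow> nat \<Rightarrow> bool" where
  "skew_symmetric M m \<longleftrightarrow> (\<forall>i<m. \<forall>j<m. M j i = - M i j)"

definition simplex_on :: "nat \<Rightarrow> nat set \<Rightarrow> (nat \<Rightarrow> real) set" where
  "simplex_on m X = {p. prob_vec m p \<and> supported_in p X}"

definition col_payoff :: "(nat \<Rightarrow> nat \<Rightarrow> real) \<Rightarrow> nat \<Rightarrow> (nat \<Rightarrow> real) \<Rightarrow> nat \<Rightarrow> real" where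
  "col_payoff M m p j = (\<Sum>k<m. M j k * p k)"

lemma bil_eq_sum_col_payoff: "bil M m q p = (\<Sum>j<m. q j * col_payoff M m p j)"
  by (simp add: bil_def col_payoff_def sum_distrib_left mult.assoc)

lemma bil_skew:
  assumes "skew_symmetric M m"
  shows "bil M m p q = - bil M m q p"
proof -
  have "bil M m q p = (\<Sum>i<m. \<Sum>j<m. q j * M j i * p i)"
    unfolding bil_def by (rule sum.swap)
  also have "\<dots> = (\<Sum>i<m. \<Sum>j<m. - (p i * M i j * q j))"
  proof (intro sum.cong refl)
    fix i j assume "i \<in> {..<m}" "j \<in> {..<m}"
    then have "M j i = - M i j" using assms unfolding skew_symmetric_def by blast
    then show "q j * M j i * p i = - (p i * M i j * q j)" by simp
  qed
  also have "\<dots> = - bil M m p q"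
    by (simp add: bil_def sum_negf)
  finally show ?thesis by simp
qed

lemma bil_self_skew: "skew_symmetric M m \<Longrightarrow> bil M m p p = 0"
  using bil_skew[of M m p p] by simp

lemma col_payoff_mix:
  "col_payoff M m (\<lambda>s. a * p s + b * q s) j = a * col_payoff M m p j + b * col_payoff M m q j"
  by (simp add: col_payoff_def sum_distrib_left sum.distrib algebra_simps)

lemma prob_vec_nonneg: "prob_vec m p \<Longrightarrow> 0 \<le> p s"
  unfolding prob_vec_def by (cases "s < m") auto

lemma prob_vec_le_1:
  assumes "prob_vec m p"
  shows "p s \<le> 1"
proof (cases "s < m")
  case True
  then have "p s \<le> (\<Sum>s<m. p s)"
    using assms by (intro member_le_sum) (auto simp: prob_vec_def)
  then show ?thesis using assms by (simp add: prob_vec_def)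
qed (use assms in \<open>simp add: prob_vec_def\<close>)

lemma simplex_on_mono: "X \<subseteq> Y \<Longrightarrow> simplex_on m X \<subseteq> simplex_on m Y"
  by (auto simp: simplex_on_def supported_in_def)

lemma simplex_on_mix:
  assumes "p \<in> simplex_on m X" "q \<in> simplex_on m X" "0 \<le> a" "a \<le> 1"
  shows "(\<lambda>s. (1 - a) * p s + a * q s) \<in> simplex_on m X"
  using assms
  by (simp add: simplex_on_def prob_vec_def supported_in_def sum.distrib sum_distrib_left[symmetric])

lemma unit_vector_in_simplex_on:
  "j \<in> X \<Longrightarrow> j < m \<Longrightarrow> (\<lambda>s. if s = j then 1 else 0) \<in> simplex_on m X"
  by (auto simp: simplex_on_def prob_vec_def supported_in_def)

lemma bil_unit_vector:
  "j < m \<Longrightarrow> bil M m (\<lambda>s. if s = j then 1 else 0) p = col_payoff M m p j"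
  by (simp add: bil_eq_sum_col_payoff if_distrib[where f = "\<lambda>x. x * _"] cong: if_cong)

lemma sym_nash_skew_iff:
  assumes skew: "skew_symmetric M m"
  shows "sym_nash M m X p \<longleftrightarrow>
           p \<in> simplex_on m X \<and> (\<forall>j<m. j \<in> X \<longrightarrow> col_payoff M m p j \<le> 0)"
proof -
  have "sym_nash M m X p \<longleftrightarrow> p \<in> simplex_on m X \<and> (\<forall>q\<in>simplex_on m X. bil M m q p \<le> 0)"
  proof -
    have "bil M m q p \<le> bil M m p p \<and> bil M m p p \<le> bil M m p q \<longleftrightarrow> bil M m q p \<le> 0" for q
      using bil_self_skew[OF skew, of p] bil_skew[OF skew, of p q] by linarith
    then show ?thesis unfolding sym_nash_def simplex_on_def by auto
  qed
  also have "(\<forall>q\<in>simplex_on m X. bil M m q p \<le> 0) \<longleftrightarrow> (\<forall>j<m. j \<in> X \<longrightarrow> col_payoff M m p j \<le> 0)"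
  proof
    assume "\<forall>q\<in>simplex_on m X. bil M m q p \<le> 0"
    then show "\<forall>j<m. j \<in> X \<longrightarrow> col_payoff M m p j \<le> 0"
      using unit_vector_in_simplex_on bil_unit_vector by metis
  next
    assume col: "\<forall>j<m. j \<in> X \<longrightarrow> col_payoff M m p j \<le> 0"
    show "\<forall>q\<in>simplex_on m X. bil M m q p \<le> 0"
    proof
      fix q assume q: "q \<in> simplex_on m X"
      have "q j * col_payoff M m p j \<le> 0" if "j < m" for j
        using q col that prob_vec_nonneg[of m q j]
        by (cases "j \<in> X") (auto simp: simplex_on_def supported_in_def mult_nonneg_nonpos)
      then show "bil M m q p \<le> 0"
        unfolding bil_eq_sum_col_payoff by (intro sum_nonpos) simp
    qed
  qed
  finally show ?thesis .
qed

lemma continuous_on_coordinate [continuous_intros]: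
  "continuous_on S (\<lambda>p::nat \<Rightarrow> real. p i)"
  by (rule continuous_on_subset[OF continuous_on_product_coordinates]) simp

lemma continuous_on_col_payoff: "continuous_on S (\<lambda>p. col_payoff M m p j)"
  unfolding col_payoff_def by (intro continuous_intros)

lemma continuous_on_Max:
  fixes f :: "'i \<Rightarrow> 'a::topological_space \<Rightarrow> 'b::linorder_topology"
  assumes "finite I" "I \<noteq> {}" "\<And>i. i \<in> I \<Longrightarrow> continuous_on S (f i)"
  shows "continuous_on S (\<lambda>x. Max ((\<lambda>i. f i x) ` I))"
  using assms
proof (induction I rule: finite_ne_induct)
  case (insert i I)
  then have "continuous_on S (\<lambda>x. max (f i x) (Max ((\<lambda>i. f i x) ` I)))"
    by (intro continuous_on_max) auto
  with insert.hyps show ?case by simp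
qed simp

lemma closed_simplex_on: "closed (simplex_on m X)"
proof -
  have "simplex_on m X = (\<Inter>s. {p. 0 \<le> p s}) \<inter> (\<Inter>s\<in>- (X \<inter> {..<m}). {p. p s = 0})
                          \<inter> {p. sum p {..<m} = 1}"
    by (auto simp: simplex_on_def prob_vec_def supported_in_def not_less) (metis linorder_not_le order_refl)
  also have "closed \<dots>"
    by (intro closed_Int closed_INT ballI closed_Collect_le closed_Collect_eq continuous_intros)
  finally show ?thesis .
qed

lemma compact_simplex_on: "compact (simplex_on m X)"
proof -
  have "compactin (product_topology (\<lambda>_. euclidean) UNIV) (PiE UNIV (\<lambda>_::nat. {0..1::real}))"
    by (subst compactin_PiE) auto
  then have "compact (PiE UNIV (\<lambda>_::nat. {0..1::real}))"
    by (simp add: euclidean_product_topology)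
  moreover have "simplex_on m X \<subseteq> PiE UNIV (\<lambda>_::nat. {0..1::real})"
    by (auto simp: simplex_on_def prob_vec_nonneg prob_vec_le_1)
  ultimately show ?thesis
    using closed_simplex_on compact_Int_closed inf.absorb2 by metis
qed

lemma skew_exists_nonpos_col_payoff:
  assumes skew: "skew_symmetric M m" and p: "p \<in> simplex_on m X"
  shows "\<exists>j\<in>X. j < m \<and> p j > 0 \<and> col_payoff M m p j \<le> 0"
proof (rule ccontr)
  assume "\<not> ?thesis"
  then have pos: "0 < col_payoff M m p j" if "j < m" "p j > 0" for j
    using p that by (force simp: simplex_on_def supported_in_def)
  have "\<exists>j<m. p j > 0"
  proof (rule ccontr)
    assume "\<not> ?thesis"
    then have "(\<Sum>j<m. p j) = 0"
      using p by (intro sum.neutral) (force simp: simplex_on_def prob_vec_def)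
    then show False using p by (simp add: simplex_on_def prob_vec_def)
  qed
  then obtain i where i: "i < m" "0 < p i" by blast
  have "0 \<le> p j * col_payoff M m p j" if "j < m" for j
    using pos[OF that] p prob_vec_nonneg[of m p j]
    by (cases "p j = 0") (auto simp: simplex_on_def less_eq_real_def)
  then have "0 < (\<Sum>j<m. p j * col_payoff M m p j)"
    using i pos by (intro sum_pos2[of _ i]) auto
  then show False
    using bil_self_skew[OF skew, of p] by (simp add: bil_eq_sum_col_payoff)
qed

lemma exists_small_mix_below:
  fixes a b l :: real
  assumes "a < l"
  shows "\<exists>e. 0 < e \<and> e \<le> 1 \<and> (1 - e) * a + e * b < l"
proof -
  have "((\<lambda>e. (1 - e) * a + e * b) \<longlongrightarrow> a) (at_right 0)"
    by (auto intro!: tendsto_eq_intros)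
  then have "\<forall>\<^sub>F e in at_right 0. (1 - e) * a + e * b < l"
    using assms by (rule order_tendstoD)
  moreover have "\<forall>\<^sub>F e in at_right (0::real). 0 < e \<and> e \<le> 1"
    by (auto simp: eventually_at_right_field intro: exI[of _ 1])
  ultimately have "\<forall>\<^sub>F e in at_right 0. 0 < e \<and> e \<le> 1 \<and> (1 - e) * a + e * b < l"
    by eventually_elim auto
  then show ?thesis
    using eventually_happens by fastforce
qed

lemma skew_sym_nash_exists:
  assumes skew: "skew_symmetric M m" and "X \<subseteq> {..<m}" "X \<noteq> {}"
  shows "\<exists>p\<in>simplex_on m X. \<forall>j\<in>X. col_payoff M m p j \<le> 0"
  using finite_subset[OF assms(2) finite_lessThan] assms(2,3)
proof (induction X rule: finite_psubset_induct)
  case (psubset X)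
  define v where "v p = Max ((\<lambda>j. col_payoff M m p j) ` X)" for p
  have v_ge: "col_payoff M m p j \<le> v p" if "j \<in> X" for p j
    unfolding v_def using psubset.hyps that by (intro Max_ge) auto
  obtain j1 where "j1 \<in> X" using psubset.prems by blast
  then have "(\<lambda>s. if s = j1 then 1 else 0) \<in> simplex_on m X"
    using psubset.prems by (intro unit_vector_in_simplex_on) auto
  then have "simplex_on m X \<noteq> {}" by blast
  moreover have "continuous_on (simplex_on m X) v"
    unfolding v_def by (intro continuous_on_Max continuous_on_col_payoff psubset.hyps psubset.prems)
  ultimately obtain p0 where p0: "p0 \<in> simplex_on m X" and p0_min: "\<forall>p\<in>simplex_on m X. v p0 \<le> v p"
    using continuous_attains_inf[OF compact_simplex_on] by blast
  \<comment> \<open>If the least maximal column payoff \<open>v p0\<close> were positive, take a strategy \<open>j0\<close> that does not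
    beat \<open>p0\<close> and an equilibrium \<open>p1\<close> of the game without \<open>j0\<close>: mixing a little of \<open>p1\<close> into \<open>p0\<close>
    pushes every column payoff below \<open>v p0\<close>.\<close>
  have "v p0 \<le> 0"
  proof (rule ccontr)
    assume "\<not> v p0 \<le> 0"
    then have v_pos: "0 < v p0" by simp
    obtain j0 where j0: "j0 \<in> X" "col_payoff M m p0 j0 \<le> 0"
      using skew_exists_nonpos_col_payoff[OF skew p0] by blast
    have "X \<noteq> {j0}"
    proof
      assume "X = {j0}"
      then have "v p0 = col_payoff M m p0 j0" by (simp add: v_def)
      with v_pos j0 show False by simp
    qed
    then have smaller: "X - {j0} \<subset> X" "X - {j0} \<subseteq> {..<m}" "X - {j0} \<noteq> {}"
      using j0 psubset.prems by auto
    obtain p1 where p1: "p1 \<in> simplex_on m (X - {j0})"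
      and p1_col: "\<forall>j\<in>X - {j0}. col_payoff M m p1 j \<le> 0"
      using psubset.IH[OF smaller] by blast
    have "col_payoff M m p0 j0 < v p0" using j0 v_pos by linarith
    then obtain e where e: "0 < e" "e \<le> 1"
      and e_j0: "(1 - e) * col_payoff M m p0 j0 + e * col_payoff M m p1 j0 < v p0"
      using exists_small_mix_below by blast
    define pe where "pe = (\<lambda>s. (1 - e) * p0 s + e * p1 s)"
    have "p1 \<in> simplex_on m X"
      using p1 simplex_on_mono[of "X - {j0}" X m] by blast
    then have pe: "pe \<in> simplex_on m X"
      unfolding pe_def using simplex_on_mix[OF p0 _ less_imp_le[OF e(1)] e(2)] by blast
    have "col_payoff M m pe j < v p0" if "j \<in> X" for j
    proof (cases "j = j0")
      case False
      have "col_payoff M m pe j = (1 - e) * col_payoff M m p0 j + e * col_payoff M m p1 j"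
        by (simp add: pe_def col_payoff_mix)
      also have "\<dots> \<le> (1 - e) * v p0 + e * 0"
        using v_ge[OF that] p1_col that False e by (intro add_mono mult_left_mono) auto
      also have "\<dots> < v p0"
        using mult_pos_pos[OF e(1) v_pos] by (simp add: algebra_simps)
      finally show ?thesis .
    qed (use e_j0 in \<open>simp add: pe_def col_payoff_mix\<close>)
    then have "v pe < v p0"
      unfolding v_def[of pe] using psubset.hyps psubset.prems by (subst Max_less_iff) auto
    moreover have "v p0 \<le> v pe" using p0_min pe by blast
    ultimately show False by simp
  qed
  then have "\<forall>j\<in>X. col_payoff M m p0 j \<le> 0"
    using v_ge order_trans by blast
  with p0 show ?case by blast
qed

lemma continuous_on_x_ln_x: "continuous_on {0..} (\<lambda>x::real. x * ln x)"
proof -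
  have "continuous (at x within {0..}) (\<lambda>x::real. x * ln x)" if "x \<in> {0..}" for x
  proof (cases "x = 0")
    case True
    have "((\<lambda>x::real. x * ln x) \<longlongrightarrow> 0) (at_right 0)" by real_asymp
    then show ?thesis using True by (simp add: continuous_within at_within_Ici_at_right)
  next
    case False
    then have "isCont (\<lambda>x::real. x * ln x) x"
      by (intro continuous_mult continuous_ident isCont_ln)
    then show ?thesis by (rule continuous_at_imp_continuous_within)
  qed
  then show ?thesis by (simp add: continuous_on_eq_continuous_within)
qed

lemma continuous_on_entropy: "continuous_on {p. \<forall>j. 0 \<le> p j} (entropy m)"
proof -
  have "continuous_on {p. \<forall>j. 0 \<le> p j} (\<lambda>p::nat \<Rightarrow> real. p j * ln (p j))" for j
    by (rule continuous_on_compose2[OF continuous_on_x_ln_x continuous_on_coordinate]) auto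
  then show ?thesis
    unfolding entropy_def by (intro continuous_on_minus continuous_on_sum)
qed

lemma x_ln_x_tangent_strict:
  fixes x s :: real
  assumes "0 \<le> x" "0 < s" "x \<noteq> s"
  shows "x - s < x * ln x - x * ln s"
proof (cases "x = 0")
  case False
  with assms have "0 < x" by simp
  with assms have "x * (ln s - ln x) < x * ((s - x) / x)"
    by (intro mult_strict_left_mono ln_diff_less) auto
  also have "\<dots> = s - x" using \<open>0 < x\<close> by simp
  finally show ?thesis by (simp add: algebra_simps)
qed (use assms in simp)

lemma x_ln_x_midpoint_strict:
  fixes a b :: real
  assumes "0 \<le> a" "0 \<le> b" "a \<noteq> b"
  shows "(a + b) / 2 * ln ((a + b) / 2) < (a * ln a + b * ln b) / 2"
proof -
  define s where "s = (a + b) / 2"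
  have "0 < s" "a \<noteq> s" "b \<noteq> s" using assms by (auto simp: s_def)
  then have "a - s < a * ln a - a * ln s" "b - s < b * ln b - b * ln s"
    using assms x_ln_x_tangent_strict by auto
  moreover have "a * ln s + b * ln s = 2 * (s * ln s)" "a + b = 2 * s"
    by (simp_all add: s_def algebra_simps)
  ultimately show ?thesis
    unfolding s_def[symmetric] by argo
qed

lemma x_ln_x_midpoint_le:
  fixes a b :: real
  assumes "0 \<le> a" "0 \<le> b"
  shows "(a + b) / 2 * ln ((a + b) / 2) \<le> (a * ln a + b * ln b) / 2"
proof (cases "a = b")
  case False
  show ?thesis by (rule less_imp_le[OF x_ln_x_midpoint_strict[OF assms False]])
qed (simp add: mult_2[symmetric])

lemma entropy_midpoint_strict:
  assumes p: "prob_vec m p" and q: "prob_vec m q" and "p \<noteq> q"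
  shows "(entropy m p + entropy m q) / 2 < entropy m (\<lambda>s. (p s + q s) / 2)"
proof -
  obtain j where j: "p j \<noteq> q j" using \<open>p \<noteq> q\<close> by blast
  then have "j < m" using p q by (metis prob_vec_def not_less)
  have "(\<Sum>j<m. (p j + q j) / 2 * ln ((p j + q j) / 2)) < (\<Sum>j<m. (p j * ln (p j) + q j * ln (q j)) / 2)"
  proof (rule sum_strict_mono_ex1)
    show "\<forall>i\<in>{..<m}. (p i + q i) / 2 * ln ((p i + q i) / 2) \<le> (p i * ln (p i) + q i * ln (q i)) / 2"
      using x_ln_x_midpoint_le prob_vec_nonneg[OF p] prob_vec_nonneg[OF q] by blast
    show "\<exists>i\<in>{..<m}. (p i + q i) / 2 * ln ((p i + q i) / 2) < (p i * ln (p i) + q i * ln (q i)) / 2"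
      using x_ln_x_midpoint_strict[OF prob_vec_nonneg[OF p] prob_vec_nonneg[OF q] j] \<open>j < m\<close> by blast
  qed simp
  moreover have "(\<Sum>j<m. (p j * ln (p j) + q j * ln (q j)) / 2) = - (entropy m p + entropy m q) / 2"
    by (simp add: entropy_def sum_divide_distrib[symmetric] sum.distrib)
  ultimately show ?thesis
    by (simp only: entropy_def)
qed

lemma ex1_max_entropy:
  assumes compact: "compact {p. P p}" and "\<exists>p. P p"
    and prob: "\<And>p. P p \<Longrightarrow> prob_vec m p"
    and midpoint: "\<And>p q. P p \<Longrightarrow> P q \<Longrightarrow> P (\<lambda>s. (p s + q s) / 2)"
  shows "\<exists>!p. P p \<and> (\<forall>q. P q \<longrightarrow> entropy m q \<le> entropy m p)"
proof -
  have "continuous_on {p. P p} (entropy m)"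
    by (rule continuous_on_subset[OF continuous_on_entropy]) (use prob prob_vec_nonneg in blast)
  moreover have "{p. P p} \<noteq> {}" using \<open>\<exists>p. P p\<close> by blast
  ultimately obtain p where "p \<in> {p. P p}" "\<forall>q\<in>{p. P p}. entropy m q \<le> entropy m p"
    using continuous_attains_sup[OF compact] by blast
  then have p: "P p" and p_max: "\<And>q. P q \<Longrightarrow> entropy m q \<le> entropy m p" by auto
  have unique: "q = p" if q: "P q" and q_max: "\<forall>r. P r \<longrightarrow> entropy m r \<le> entropy m q" for q
  proof (rule ccontr)
    assume "q \<noteq> p"
    then have "(entropy m q + entropy m p) / 2 < entropy m (\<lambda>s. (q s + p s) / 2)"
      by (rule entropy_midpoint_strict[OF prob[OF q] prob[OF p]])
    moreover have "entropy m q = entropy m p"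
      using q_max p p_max[OF q] by (simp add: order_antisym)
    moreover have "entropy m (\<lambda>s. (q s + p s) / 2) \<le> entropy m p"
      by (rule p_max[OF midpoint[OF q p]])
    ultimately show False by simp
  qed
  show ?thesis
  proof (rule ex1I[of _ p])
    show "P p \<and> (\<forall>q. P q \<longrightarrow> entropy m q \<le> entropy m p)" using p p_max by blast
  qed (use unique in blast)
qed

lemma compact_sym_nash_skew:
  assumes skew: "skew_symmetric M m"
  shows "compact {p. sym_nash M m X p}"
proof -
  have "{p. sym_nash M m X p} = simplex_on m X \<inter> (\<Inter>j\<in>X \<inter> {..<m}. {p. col_payoff M m p j \<le> 0})"
    by (auto simp: sym_nash_skew_iff[OF skew])
  also have "compact \<dots>"
    by (intro compact_Int_closed compact_simplex_on closed_INT ballI closed_Collect_le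
        continuous_on_col_payoff continuous_on_const)
  finally show ?thesis .
qed

lemma sym_nash_mix_skew:
  assumes skew: "skew_symmetric M m" and "sym_nash M m X p" "sym_nash M m X q" "0 \<le> a" "a \<le> 1"
  shows "sym_nash M m X (\<lambda>s. (1 - a) * p s + a * q s)"
proof -
  have "p \<in> simplex_on m X" "q \<in> simplex_on m X"
    and "\<forall>j<m. j \<in> X \<longrightarrow> col_payoff M m p j \<le> 0 \<and> col_payoff M m q j \<le> 0"
    using assms(2,3) by (simp_all add: sym_nash_skew_iff[OF skew])
  with assms(4,5) show ?thesis
    by (auto simp: sym_nash_skew_iff[OF skew] col_payoff_mix simplex_on_mix
        intro!: add_nonpos_nonpos mult_nonneg_nonpos)
qed

lemma sym_nash_nash_me:
  assumes skew: "skew_symmetric M m" and "X \<subseteq> {..<m}" "X \<noteq> {}"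
  shows "sym_nash M m X (nash_me M m X)"
proof -
  have "\<exists>!p. sym_nash M m X p \<and> (\<forall>q. sym_nash M m X q \<longrightarrow> entropy m q \<le> entropy m p)"
  proof (rule ex1_max_entropy)
    show "compact {p. sym_nash M m X p}" by (rule compact_sym_nash_skew[OF skew])
    show "\<exists>p. sym_nash M m X p"
      using skew_sym_nash_exists[OF skew assms(2,3)] by (auto simp: sym_nash_skew_iff[OF skew])
    show "prob_vec m p" if "sym_nash M m X p" for p
      using that by (simp add: sym_nash_def)
    show "sym_nash M m X (\<lambda>s. (p s + q s) / 2)" if "sym_nash M m X p" "sym_nash M m X q" for p q
      using sym_nash_mix_skew[OF skew that, of "1/2"] by (simp add: add_divide_distrib)
  qed
  then show ?thesis
    unfolding nash_me_def by (rule theI'[THEN conjunct1])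
qed

lemma sym_nash_bil_nonneg:
  assumes skew: "skew_symmetric M m" and "sym_nash M m X p" "q \<in> simplex_on m X"
  shows "0 \<le> bil M m p q"
  using assms bil_self_skew[OF skew, of p] by (simp add: sym_nash_def simplex_on_def)

lemma supp_subset: "supported_in p X \<Longrightarrow> supp m p \<subseteq> X"
  by (auto simp: supported_in_def supp_def)

lemma supp_nonempty:
  assumes "prob_vec m p"
  shows "supp m p \<noteq> {}"
proof
  assume "supp m p = {}"
  then have "p s = 0" if "s < m" for s
    using that prob_vec_nonneg[OF assms, of s] by (force simp: supp_def)
  then have "(\<Sum>s<m. p s) = 0" by simp
  with assms show False by (simp add: prob_vec_def)
qed

lemma nc_rem_subset: "nc_rem M m i \<subseteq> {..<m}"
  by (induction i) auto

lemma nc_rem_antimono: "i \<le> j \<Longrightarrow> nc_rem M m j \<subseteq> nc_rem M m i"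
  by (rule lift_Suc_antimono_le[where f = "nc_rem M m"]) auto

lemma nc_rem_Suc_psubset:
  assumes skew: "skew_symmetric M m" and "nc_rem M m i \<noteq> {}"
  shows "nc_rem M m (Suc i) \<subset> nc_rem M m i"
proof -
  have "sym_nash M m (nc_rem M m i) (nash_me M m (nc_rem M m i))"
    using sym_nash_nash_me[OF skew nc_rem_subset assms(2)] .
  then have "supp m (nash_me M m (nc_rem M m i)) \<subseteq> nc_rem M m i"
    and "supp m (nash_me M m (nc_rem M m i)) \<noteq> {}"
    by (simp_all add: sym_nash_def supp_subset supp_nonempty)
  then show ?thesis by auto
qed

lemma card_nc_rem_le:
  assumes skew: "skew_symmetric M m"
  shows "card (nc_rem M m i) \<le> m - i"
proof (induction i)
  case (Suc i)
  show ?case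
  proof (cases "nc_rem M m i = {}")
    case False
    have "card (nc_rem M m (Suc i)) < card (nc_rem M m i)"
      using nc_rem_Suc_psubset[OF skew False] finite_subset[OF nc_rem_subset finite_lessThan]
      by (rule psubset_card_mono[rotated])
    with Suc.IH show ?thesis by simp
  qed simp
qed simp

lemma nc_rem_nc_num:
  assumes skew: "skew_symmetric M m"
  shows "nc_rem M m (nc_num M m) = {}" and "k < nc_num M m \<Longrightarrow> nc_rem M m k \<noteq> {}"
proof -
  have "nc_rem M m m = {}"
    using card_nc_rem_le[OF skew, of m] finite_subset[OF nc_rem_subset finite_lessThan] by simp
  then show "nc_rem M m (nc_num M m) = {}"
    unfolding nc_num_def by (rule LeastI)
  show "k < nc_num M m \<Longrightarrow> nc_rem M m k \<noteq> {}"
    unfolding nc_num_def by (rule not_less_Least)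
qed

lemma Union_nc_cluster:
  assumes skew: "skew_symmetric M m" and "k \<le> nc_num M m"
  shows "(\<Union>r\<in>{k..<nc_num M m}. nc_cluster M m r) = nc_rem M m k"
  using assms(2)
proof (induction k rule: inc_induct)
  case base
  then show ?case using nc_rem_nc_num(1)[OF skew] by simp
next
  case (step k)
  have "{k..<nc_num M m} = insert k {Suc k..<nc_num M m}"
    using step(2) by auto
  then have "(\<Union>r\<in>{k..<nc_num M m}. nc_cluster M m r) = nc_cluster M m k \<union> nc_rem M m (Suc k)"
    using step.IH by simp
  also have "\<dots> = nc_rem M m k"
    using sym_nash_nash_me[OF skew nc_rem_subset nc_rem_nc_num(2)[OF skew step(2)]]
    by (auto simp: nc_cluster_def sym_nash_def dest: supp_subset)
  finally show ?case .
qed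

lemma sym_nash_nc_p:
  assumes skew: "skew_symmetric M m" and "k < nc_num M m"
  shows "sym_nash M m (nc_rem M m k) (nc_p M m k)"
  unfolding nc_p_def Union_nc_cluster[OF skew less_imp_le[OF assms(2)]]
  by (rule sym_nash_nash_me[OF skew nc_rem_subset nc_rem_nc_num(2)[OF skew assms(2)]])

lemma nc_p_in_simplex_on_nc_rem:
  assumes skew: "skew_symmetric M m" and "i \<le> k" "k < nc_num M m"
  shows "nc_p M m k \<in> simplex_on m (nc_rem M m i)"
proof -
  have "nc_p M m k \<in> simplex_on m (nc_rem M m k)"
    using sym_nash_nc_p[OF skew assms(3)] by (simp add: sym_nash_def simplex_on_def)
  then show ?thesis
    using simplex_on_mono[OF nc_rem_antimono[OF assms(2)]] by blast
qed

lemma NPP_nonneg: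
  assumes skew: "skew_symmetric M m" and "i \<le> j" "j < nc_num M m"
  shows "0 \<le> NPP M m i j"
  unfolding NPP_def using assms
  by (intro sym_nash_bil_nonneg[OF skew sym_nash_nc_p[OF skew] nc_p_in_simplex_on_nc_rem[OF skew]])
    simp_all

theorem theorem2:
  fixes M :: "nat \<Rightarrow> nat \<Rightarrow> real" and m :: nat
  assumes "0 < m"
    and skew: "\<forall>i<m. \<forall>j<m. M j i = - M i j"
  shows "\<forall>i<nc_num M m. \<forall>j<nc_num M m.
           (i \<le> j \<longrightarrow> NPP M m i j \<ge> 0) \<and> (j < i \<longrightarrow> NPP M m i j \<le> 0)"
proof (intro allI impI conjI)
  have skew_M: "skew_symmetric M m"
    unfolding skew_symmetric_def by (rule skew)
  fix i j assume i: "i < nc_num M m" and j: "j < nc_num M m"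
  show "i \<le> j \<Longrightarrow> 0 \<le> NPP M m i j"
    using NPP_nonneg[OF skew_M _ j] by blast
  assume "j < i"
  then have "0 \<le> NPP M m j i"
    using NPP_nonneg[OF skew_M _ i] by simp
  then show "NPP M m i j \<le> 0"
    using bil_skew[OF skew_M, of "nc_p M m i" "nc_p M m j"] by (simp add: NPP_def)
qed

end
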